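(* Let $\varphi:\mathbb R\to\mathbb R$ be concave. Assume only upper-bound group constraints (with $\mathcal S\neq\emptyset$) and let $F$ be a maxmin-fair distribution over $\mathcal S$ for satisfaction $A=V$. Then for every probability distribution $D$ over $\mathcal S$, $$\sum_{u\in\mathcal U}\varphi(F[u])\ \ge\ \sum_{u\in\mathcal U}\varphi(D[u]).$$
   Context: Ranking setting: $\mathcal U=\{u_1,\dots,u_n\}$ finite set of individuals partitioned into groups $C_1,\dots,C_t$; $R:\mathcal U\to\mathbb R$ relevance with distinct values; rankings are bijections $r:\mathcal U\to[n]$. Only upper bounds: $\mathcal S=\{r:\ |\{u\in C_k: r(u)\le i\}|\le u_i^k\ \forall i\in[n],k\in[t]\}$ for given integers $u_i^k$. Value function $V(r,u)=f(r(u))-g(u)$ with $f:[n]\to\mathbb R$ non-increasing and $g:\mathcal U\to\mathbb R$ satisfying $R(u)\ge R(v)\Rightarrow g(u)\ge g(v)$. For a distribution $D$ over $\mathcal S$, $D[u]=\mathbb E_{r\sim D}[V(r,u)]$. $F$ is maxmin-fair if for every distribution $D$ over $\mathcal S$ and every $u$: $D[u]>F[u]$ implies there is $v$ with $D[v]<F[v]\le F[u]$. *)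

theory Defs
  imports "HOL-Probability.Probability"
begin

text \<open>Rankings of the finite universe U: bijections U -> {1..card U}
  (fixed to 0 outside U, so that rankings correspond one-to-one to functions on U).\<close>
definition is_ranking :: "'a set \<Rightarrow> ('a \<Rightarrow> nat) \<Rightarrow> bool" where
  "is_ranking U r \<longleftrightarrow> bij_betw r U {1..card U} \<and> (\<forall>x. x \<notin> U \<longrightarrow> r x = 0)"

definition feasible :: "'a set \<Rightarrow> nat \<Rightarrow> (nat \<Rightarrow> 'a set) \<Rightarrow> (nat \<Rightarrow> nat \<Rightarrow> int)
    \<Rightarrow> ('a \<Rightarrow> nat) set" where
  "feasible U t C ub = {r. is_ranking U r \<and>
     (\<forall>i\<in>{1..card U}. \<forall>k\<in>{1..t}. int (card {u\<in>C k. r u \<le> i}) \<le> ub i k)}"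

definition val :: "(nat \<Rightarrow> real) \<Rightarrow> ('a \<Rightarrow> real) \<Rightarrow> ('a \<Rightarrow> nat) \<Rightarrow> 'a \<Rightarrow> real" where
  "val f g r u = f (r u) - g u"

definition expval :: "(nat \<Rightarrow> real) \<Rightarrow> ('a \<Rightarrow> real) \<Rightarrow> ('a \<Rightarrow> nat) pmf \<Rightarrow> 'a \<Rightarrow> real" where
  "expval f g D u = measure_pmf.expectation D (\<lambda>r. val f g r u)"

definition maxmin_fair :: "'a set \<Rightarrow> ('a \<Rightarrow> nat) set \<Rightarrow> (nat \<Rightarrow> real) \<Rightarrow> ('a \<Rightarrow> real)
    \<Rightarrow> ('a \<Rightarrow> nat) pmf \<Rightarrow> bool" where
  "maxmin_fair U S f g F \<longleftrightarrow> set_pmf F \<subseteq> S \<and>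
     (\<forall>D. set_pmf D \<subseteq> S \<longrightarrow> (\<forall>u\<in>U. expval f g D u > expval f g F u \<longrightarrow>
        (\<exists>v\<in>U. expval f g D v < expval f g F v \<and> expval f g F v \<le> expval f g F u)))"

end

theory Submission
  imports Defs
begin

(* Fix a level set L = {u. F[u] <= c} of the maxmin-fair F. Map every ranking r in the
  support of F to a feasible ranking that lowers the ranks of L (pointwise) as far as
  possible: a greedy exchange argument under upper-bound constraints shows that some
  lowering of r has, for every i, at least as many members of L in the top i positions as
  any feasible ranking, hence gives L the maximal total value. The resulting distribution
  G satisfies G[u] >= F[u] on L, so maxmin fairness forbids G[w] > F[w] for any w in L; hence
  F already gives L the maximal total value, in particular at least what D gives it. Since
  the total value is the same for every distribution, the vector F[.] weakly majorizes D[.]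
  along the level sets of F, and concavity of phi (through a supergradient and Abel
  summation over these level sets) yields the inequality. *)

lemma finite_strict_sublevel_eq_sublevel:
  fixes x :: "'a \<Rightarrow> real"
  assumes "finite U"
  obtains c where "c < m" and "{u\<in>U. x u < m} = {u\<in>U. x u \<le> c}"
proof
  let ?c = "Max (insert (m - 1) (x ` {u\<in>U. x u < m}))"
  show "?c < m"
    using assms by simp
  have "x u \<le> ?c" if "u \<in> U" "x u < m" for u
    using assms that by simp
  then show "{u\<in>U. x u < m} = {u\<in>U. x u \<le> ?c}"
    using \<open>?c < m\<close> by force
qed

lemma sum_antitone_mult_nonpos:
  fixes x d :: "'a \<Rightarrow> real" and h :: "real \<Rightarrow> real"
  assumes "finite U" and "antimono h"
    and "\<And>u. u \<in> U \<Longrightarrow> 0 \<le> h (x u)"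
    and "\<And>c. (\<Sum>u\<in>{u\<in>U. x u \<le> c}. d u) \<le> 0"
  shows "(\<Sum>u\<in>U. h (x u) * d u) \<le> 0"
  using assms
proof (induction "card U" arbitrary: U h rule: less_induct)
  case less
  show ?case
  proof (cases "U = {}")
    case False
    define m where "m = Max (x ` U)"
    have x_le_m: "x u \<le> m" if "u \<in> U" for u
      using less.prems(1) that by (simp add: m_def)
    have "m \<in> x ` U"
      using less.prems(1) False by (simp add: m_def)
    then obtain u0 where u0: "u0 \<in> U" "x u0 = m"
      by blast
    define U' where "U' = {u\<in>U. x u < m}"
    define h' where "h' = (\<lambda>z. h z - h m)"
    have "finite U'"
      using less.prems(1) by (simp add: U'_def)
    have "card U' < card U"
      using u0 less.prems(1) by (intro psubset_card_mono) (auto simp: U'_def)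
    moreover have "antimono h'"
      using less.prems(2) by (auto simp: h'_def antimono_def)
    moreover have "0 \<le> h' (x u)" if "u \<in> U'" for u
      using that less.prems(2) by (auto simp: h'_def U'_def antimono_def)
    moreover have "(\<Sum>u\<in>{u\<in>U'. x u \<le> c}. d u) \<le> 0" for c
    proof -
      obtain c' where "c' < m" and "U' = {u\<in>U. x u \<le> c'}"
        using finite_strict_sublevel_eq_sublevel[OF less.prems(1)] by (auto simp: U'_def)
      then have "{u\<in>U'. x u \<le> c} = {u\<in>U. x u \<le> min c c'}"
        by auto
      then show ?thesis
        using less.prems(4) by presburger
    qed
    ultimately have IH: "(\<Sum>u\<in>U'. h' (x u) * d u) \<le> 0"
      using less.hyps[OF _ \<open>finite U'\<close>] by blast
    have "(\<Sum>u\<in>U. h (x u) * d u) = (\<Sum>u\<in>U. h' (x u) * d u) + h m * (\<Sum>u\<in>U. d u)"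
      by (simp add: h'_def sum_distrib_left algebra_simps sum.distrib[symmetric] sum_subtractf)
    also have "(\<Sum>u\<in>U. h' (x u) * d u) = (\<Sum>u\<in>U'. h' (x u) * d u)"
      using less.prems(1) x_le_m by (intro sum.mono_neutral_right) (force simp: U'_def h'_def)+
    finally have split: "(\<Sum>u\<in>U. h (x u) * d u) = (\<Sum>u\<in>U'. h' (x u) * d u) + h m * (\<Sum>u\<in>U. d u)" .
    have "{u\<in>U. x u \<le> m} = U"
      using x_le_m by auto
    then have "(\<Sum>u\<in>U. d u) \<le> 0"
      using less.prems(4)[of m] by simp
    moreover have "0 \<le> h m"
      using less.prems(3) u0 by metis
    ultimately show ?thesis
      using IH split by (simp add: mult_nonneg_nonpos add_nonpos_nonpos)
  qed simp
qed

lemma convex_on_UNIV_subgradient: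
  fixes \<psi> :: "real \<Rightarrow> real"
  assumes "convex_on UNIV \<psi>"
  obtains s where "mono s" and "\<And>c y. \<psi> c + s c * (y - c) \<le> \<psi> y"
proof -
  define sl where "sl a b = (\<psi> a - \<psi> b) / (a - b)" for a b
  have sl_chain: "sl x c \<le> sl c y" if "x < c" "c < y" for x c y
    using convex_on_slope_le[OF assms _ _ that] by (simp add: sl_def)
  define s where "s c = Sup ((\<lambda>x. sl x c) ` {..<c})" for c
  have bdd: "bdd_above ((\<lambda>x. sl x c) ` {..<c})" for c
    using sl_chain[of _ c "c + 1"] by (auto simp: bdd_above_def)
  have sl_le_s: "sl x c \<le> s c" if "x < c" for x c
    unfolding s_def using bdd that by (auto intro: cSup_upper)
  have s_le_sl: "s c \<le> sl c y" if "c < y" for c y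
    unfolding s_def using that sl_chain by (intro cSup_least) auto
  show ?thesis
  proof
    show "mono s"
    proof
      fix a b :: real assume "a \<le> b"
      then show "s a \<le> s b"
        using s_le_sl[of a b] sl_le_s[of a b] by (cases "a = b") auto
    qed
    show "\<psi> c + s c * (y - c) \<le> \<psi> y" for c y
    proof (cases y c rule: linorder_cases)
      case less
      have "(\<psi> y - \<psi> c) / (y - c) \<le> s c"
        using sl_le_s[OF less] by (simp add: sl_def)
      then show ?thesis
        using less by (simp add: neg_divide_le_eq)
    next
      case greater
      have "sl c y = (\<psi> y - \<psi> c) / (y - c)"
        unfolding sl_def by (metis minus_diff_eq minus_divide_divide)
      then have "s c \<le> (\<psi> y - \<psi> c) / (y - c)"
        using s_le_sl[OF greater] by simp
      then show ?thesis
        using greater by (simp add: pos_le_divide_eq)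
    qed simp
  qed
qed

lemma sum_concave_le_if_level_sums_le:
  fixes x y :: "'a \<Rightarrow> real" and \<phi> :: "real \<Rightarrow> real"
  assumes "finite U" and "concave_on UNIV \<phi>"
    and level: "\<And>c. (\<Sum>u\<in>{u\<in>U. x u \<le> c}. y u) \<le> (\<Sum>u\<in>{u\<in>U. x u \<le> c}. x u)"
    and total: "(\<Sum>u\<in>U. y u) = (\<Sum>u\<in>U. x u)"
  shows "(\<Sum>u\<in>U. \<phi> (y u)) \<le> (\<Sum>u\<in>U. \<phi> (x u))"
proof -
  have "convex_on UNIV (\<lambda>z. - \<phi> z)"
    using assms(2) by (simp add: convex_on_iff_concave)
  then obtain s where "mono s" and tangent: "\<And>c z. - \<phi> c + s c * (z - c) \<le> - \<phi> z"
    using convex_on_UNIV_subgradient by blast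
  define d where "d u = y u - x u" for u
  define m where "m = Max (x ` U)"
  have "(\<Sum>u\<in>U. (s m - s (x u)) * d u) \<le> 0"
  proof (rule sum_antitone_mult_nonpos[where h = "\<lambda>z. s m - s z", OF assms(1)])
    show "antimono (\<lambda>z. s m - s z)"
      using \<open>mono s\<close> by (auto simp: antimono_def mono_def)
    show "0 \<le> s m - s (x u)" if "u \<in> U" for u
      using \<open>mono s\<close> assms(1) that by (simp add: m_def monoD)
    show "(\<Sum>u\<in>{u\<in>U. x u \<le> c}. d u) \<le> 0" for c
      using level[of c] by (simp add: d_def sum_subtractf)
  qed
  moreover have "(\<Sum>u\<in>U. d u) = 0"
    using total by (simp add: d_def sum_subtractf)
  ultimately have "0 \<le> (\<Sum>u\<in>U. s (x u) * d u)"
    by (simp add: left_diff_distrib sum_subtractf sum_distrib_left[symmetric])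
  moreover have "(\<Sum>u\<in>U. \<phi> (y u)) \<le> (\<Sum>u\<in>U. \<phi> (x u) - s (x u) * d u)"
    using tangent by (intro sum_mono) (smt (verit) d_def)
  ultimately show ?thesis
    by (simp add: sum_subtractf)
qed

definition rank_count :: "'a set \<Rightarrow> ('a \<Rightarrow> nat) \<Rightarrow> nat \<Rightarrow> nat" where
  "rank_count L r i = card {w\<in>L. r w \<le> i}"

lemma sum_comp_eq_rank_count:
  fixes f :: "nat \<Rightarrow> real" and r :: "'a \<Rightarrow> nat"
  assumes "finite L" and "\<And>w. w \<in> L \<Longrightarrow> r w \<in> {1..m}"
  shows "(\<Sum>w\<in>L. f (r w)) =
    real (card L) * f m + (\<Sum>i\<in>{1..<m}. (f i - f (Suc i)) * real (rank_count L r i))"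
proof -
  have telescope: "f p = f m + (\<Sum>i\<in>{1..<m}. if p \<le> i then f i - f (Suc i) else 0)"
    if "p \<in> {1..m}" for p
  proof -
    have "{i\<in>{1..<m}. p \<le> i} = {p..<m}"
      using that by auto
    then have "(\<Sum>i\<in>{1..<m}. if p \<le> i then f i - f (Suc i) else 0) = (\<Sum>i\<in>{p..<m}. f i - f (Suc i))"
      by (simp add: sum.inter_filter[symmetric])
    also have "\<dots> = f p - f m"
      using sum_Suc_diff'[of p m f] that by (simp add: sum_subtractf)
    finally show ?thesis
      by simp
  qed
  have "(\<Sum>w\<in>L. f (r w)) = (\<Sum>w\<in>L. f m + (\<Sum>i\<in>{1..<m}. if r w \<le> i then f i - f (Suc i) else 0))"
    using assms(2) telescope by (intro sum.cong) auto
  also have "\<dots> = real (card L) * f m + (\<Sum>i\<in>{1..<m}. \<Sum>w\<in>L. if r w \<le> i then f i - f (Suc i) else 0)"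
    by (simp add: sum.distrib sum.swap[of _ L])
  also have "\<dots> = real (card L) * f m + (\<Sum>i\<in>{1..<m}. (f i - f (Suc i)) * real (rank_count L r i))"
    using assms(1) by (simp add: sum.inter_filter[symmetric] rank_count_def mult.commute)
  finally show ?thesis .
qed

lemma sum_comp_le_if_rank_count_le:
  fixes f :: "nat \<Rightarrow> real"
  assumes "finite L" and "antimono_on {1..m} f"
    and "\<And>w. w \<in> L \<Longrightarrow> r w \<in> {1..m}" and "\<And>w. w \<in> L \<Longrightarrow> q w \<in> {1..m}"
    and "\<And>i. rank_count L r i \<le> rank_count L q i"
  shows "(\<Sum>w\<in>L. f (r w)) \<le> (\<Sum>w\<in>L. f (q w))"
proof -
  have "(f i - f (Suc i)) * real (rank_count L r i) \<le> (f i - f (Suc i)) * real (rank_count L q i)"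
    if "i \<in> {1..<m}" for i
    using assms(2,5) that by (intro mult_left_mono) (auto simp: monotone_on_def)
  then have "(\<Sum>i\<in>{1..<m}. (f i - f (Suc i)) * real (rank_count L r i))
      \<le> (\<Sum>i\<in>{1..<m}. (f i - f (Suc i)) * real (rank_count L q i))"
    by (rule sum_mono)
  then show ?thesis
    using sum_comp_eq_rank_count[where r = r, OF assms(1,3)] sum_comp_eq_rank_count[where r = q, OF assms(1,4)]
    by simp
qed

lemma swap_lowers_ranks:
  fixes r :: "'a \<Rightarrow> nat"
  assumes "a \<in> L" "b \<notin> L" "r b < r a"
  shows "\<forall>w\<in>L. Fun.swap a b r w \<le> r w" and "Fun.swap a b r a < r a"
proof -
  show "\<forall>w\<in>L. Fun.swap a b r w \<le> r w"
  proof
    fix w assume "w \<in> L"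
    then have "w \<noteq> b"
      using assms(2) by blast
    then show "Fun.swap a b r w \<le> r w"
      using assms by (cases "w = a") auto
  qed
  show "Fun.swap a b r a < r a"
    using assms by simp
qed

lemma card_swap_sublevel:
  fixes r :: "'a \<Rightarrow> nat"
  assumes "x \<in> A \<longleftrightarrow> y \<in> A"
  shows "card {u\<in>A. Fun.swap x y r u \<le> j} = card {u\<in>A. r u \<le> j}"
proof -
  have "Transposition.transpose x y u \<in> A \<longleftrightarrow> u \<in> A" for u
    using assms by (cases "u = x \<or> u = y") auto
  then have "{u\<in>A. Fun.swap x y r u \<le> j} = Transposition.transpose x y ` {u\<in>A. r u \<le> j}"
    by (auto simp: in_transpose_image_iff)
  then show ?thesis
    by (simp add: card_image)
qed

lemma swap_sublevel_subset:
  fixes r :: "'a \<Rightarrow> nat"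
  assumes "r y < r x"
  shows "{u\<in>A. Fun.swap x y r u \<le> j} \<subseteq> {u\<in>A. r u \<le> j} \<union> {u\<in>A. u = x \<and> r y \<le> j \<and> j < r x}"
proof
  fix u assume "u \<in> {u\<in>A. Fun.swap x y r u \<le> j}"
  then show "u \<in> {u\<in>A. r u \<le> j} \<union> {u\<in>A. u = x \<and> r y \<le> j \<and> j < r x}"
    using assms by (cases "u = x"; cases "u = y") auto
qed

lemma obtain_last_before:
  fixes i :: nat
  assumes "0 < i"
  obtains j0 where "j0 < i" and "\<And>j. j0 < j \<Longrightarrow> j < i \<Longrightarrow> \<not> P j"
proof -
  let ?J = "{j. j < i \<and> (j = 0 \<or> P j)}"
  have "finite ?J"
    by simp
  moreover have "0 \<in> ?J"
    using assms by simp
  ultimately have "Max ?J < i"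
    using Max_in[of ?J] by blast
  moreover have "\<not> P j" if "Max ?J < j" "j < i" for j
  proof
    assume "P j"
    then have "j \<le> Max ?J"
      using \<open>finite ?J\<close> \<open>j < i\<close> by (intro Max_ge) auto
    then show False
      using that(1) by simp
  qed
  ultimately show ?thesis
    using that by blast
qed

lemma sum_pmf_mult_le_sum_pmf_mult:
  fixes h h' :: "'b \<Rightarrow> real"
  assumes "finite A" "set_pmf D \<subseteq> A" "set_pmf G \<subseteq> A"
    and "\<And>r. r \<in> A \<Longrightarrow> h r \<le> M" and "\<And>r. r \<in> A \<Longrightarrow> M \<le> h' r"
  shows "(\<Sum>r\<in>A. pmf D r * h r) \<le> (\<Sum>r\<in>A. pmf G r * h' r)"
proof -
  have "(\<Sum>r\<in>A. pmf D r * h r) \<le> (\<Sum>r\<in>A. pmf D r * M)"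
    using assms(4) by (intro sum_mono mult_left_mono) auto
  also have "\<dots> = (\<Sum>r\<in>A. pmf G r * M)"
    using sum_pmf_eq_1[OF assms(1,2)] sum_pmf_eq_1[OF assms(1,3)] by (simp add: sum_distrib_right[symmetric])
  also have "\<dots> \<le> (\<Sum>r\<in>A. pmf G r * h' r)"
    using assms(5) by (intro sum_mono mult_left_mono) auto
  finally show ?thesis .
qed

locale group_partition =
  fixes U :: "'a set" and t :: nat and C :: "nat \<Rightarrow> 'a set" and ub :: "nat \<Rightarrow> nat \<Rightarrow> int"
  assumes finite_U: "finite U"
    and group_subset: "\<And>k. k \<in> {1..t} \<Longrightarrow> C k \<subseteq> U"
    and groups_disjoint: "\<And>k l. k \<in> {1..t} \<Longrightarrow> l \<in> {1..t} \<Longrightarrow> k \<noteq> l \<Longrightarrow> C k \<inter> C l = {}"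
    and groups_cover: "(\<Union>k\<in>{1..t}. C k) = U"
begin

abbreviation "S \<equiv> feasible U t C ub"
abbreviation "n \<equiv> card U"

lemma finite_group: "k \<in> {1..t} \<Longrightarrow> finite (C k)"
  using group_subset finite_U finite_subset by blast

lemma card_eq_sum_groups:
  assumes "Y \<subseteq> U"
  shows "card Y = (\<Sum>k\<in>{1..t}. card (Y \<inter> C k))"
proof -
  have "Y = (\<Union>k\<in>{1..t}. Y \<inter> C k)"
    using assms groups_cover by blast
  moreover have "card (\<Union>k\<in>{1..t}. Y \<inter> C k) = (\<Sum>k\<in>{1..t}. card (Y \<inter> C k))"
    using finite_group groups_disjoint by (intro card_UN_disjoint) blast+
  ultimately show ?thesis
    by simp
qed

lemma exists_group_card_less:
  assumes "X \<subseteq> U" "Y \<subseteq> U" "card X < card Y"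
  obtains k where "k \<in> {1..t}" "card (X \<inter> C k) < card (Y \<inter> C k)"
proof -
  have "(\<Sum>k\<in>{1..t}. card (X \<inter> C k)) < (\<Sum>k\<in>{1..t}. card (Y \<inter> C k))"
    using assms(3) card_eq_sum_groups[OF assms(1)] card_eq_sum_groups[OF assms(2)] by simp
  then show ?thesis
    using that by (meson not_less sum_mono)
qed

lemma feasible_bij_betw: "r \<in> S \<Longrightarrow> bij_betw r U {1..n}"
  by (simp add: feasible_def is_ranking_def)

lemma feasible_rank_in: "r \<in> S \<Longrightarrow> u \<in> U \<Longrightarrow> r u \<in> {1..n}"
  using feasible_bij_betw bij_betwE by blast

lemma feasible_zero_outside: "r \<in> S \<Longrightarrow> u \<notin> U \<Longrightarrow> r u = 0"
  by (simp add: feasible_def is_ranking_def)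

lemma feasible_group_bound:
  "r \<in> S \<Longrightarrow> j \<in> {1..n} \<Longrightarrow> k \<in> {1..t} \<Longrightarrow> int (card {u\<in>C k. r u \<le> j}) \<le> ub j k"
  by (simp add: feasible_def)

lemma finite_feasible: "finite S"
proof (rule finite_subset)
  show "S \<subseteq> {r. \<forall>u. (u \<in> U \<longrightarrow> r u \<in> {1..n}) \<and> (u \<notin> U \<longrightarrow> r u = 0)}"
    using feasible_rank_in feasible_zero_outside by blast
qed (rule finite_set_of_finite_funs[OF finite_U finite_atLeastAtMost])

lemma card_rank_window:
  assumes "r \<in> S" and "b \<le> n"
  shows "card {u\<in>U. a < r u \<and> r u \<le> b} = b - a"
proof -
  have "r ` {u\<in>U. a < r u \<and> r u \<le> b} = {v \<in> r ` U. a < v \<and> v \<le> b}"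
    by auto
  also have "\<dots> = {a<..b}"
    using bij_betw_imp_surj_on[OF feasible_bij_betw[OF assms(1)]] assms(2) by auto
  finally have "r ` {u\<in>U. a < r u \<and> r u \<le> b} = {a<..b}" .
  moreover have "inj_on r {u\<in>U. a < r u \<and> r u \<le> b}"
    using bij_betw_imp_inj_on[OF feasible_bij_betw[OF assms(1)]] by (rule inj_on_subset) auto
  ultimately show ?thesis
    using card_image by fastforce
qed

lemma feasible_swapI:
  assumes "r \<in> S" "x \<in> U" "y \<in> U"
    and "\<And>j k. j \<in> {1..n} \<Longrightarrow> k \<in> {1..t} \<Longrightarrow> int (card {u\<in>C k. Fun.swap x y r u \<le> j}) \<le> ub j k"
  shows "Fun.swap x y r \<in> S"
proof -
  have "bij_betw (Fun.swap x y r) U {1..n}"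
    using assms(2,3) by (intro bij_betw_trans[OF _ feasible_bij_betw[OF assms(1)]]) simp
  moreover have "Fun.swap x y r u = 0" if "u \<notin> U" for u
  proof -
    have "u \<noteq> x" "u \<noteq> y"
      using that assms(2,3) by auto
    then show ?thesis
      using feasible_zero_outside[OF assms(1) that] by simp
  qed
  ultimately show ?thesis
    using assms(4) by (simp add: feasible_def is_ranking_def)
qed

lemma feasible_swap_same_group:
  assumes "r \<in> S" "k \<in> {1..t}" "x \<in> C k" "y \<in> C k"
  shows "Fun.swap x y r \<in> S"
proof (rule feasible_swapI[OF assms(1)])
  show "x \<in> U" "y \<in> U"
    using assms group_subset by auto
  fix j l assume "j \<in> {1..n}" "l \<in> {1..t}"
  moreover have "x \<in> C l \<longleftrightarrow> y \<in> C l"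
    using groups_disjoint[OF \<open>l \<in> {1..t}\<close> assms(2)] assms(3,4) by blast
  ultimately show "int (card {u\<in>C l. Fun.swap x y r u \<le> j}) \<le> ub j l"
    using feasible_group_bound[OF assms(1)] card_swap_sublevel[of x "C l" y r j] by simp
qed

lemma feasible_swap_across_groups:
  assumes r: "r \<in> S" and k: "k \<in> {1..t}" and x: "x \<in> C k" and y: "y \<in> U" "y \<notin> C k"
    and "r y < r x"
    and slack: "\<And>j. j \<in> {1..n} \<Longrightarrow> r y \<le> j \<Longrightarrow> j < r x \<Longrightarrow> int (card {u\<in>C k. r u \<le> j}) < ub j k"
  shows "Fun.swap x y r \<in> S"
proof (rule feasible_swapI[OF r _ y(1)])
  show "x \<in> U"
    using x k group_subset by blast
  fix j l assume j: "j \<in> {1..n}" and l: "l \<in> {1..t}"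
  let ?A = "{u\<in>C l. r u \<le> j}" and ?X = "{u\<in>C l. u = x \<and> r y \<le> j \<and> j < r x}"
  have "card {u\<in>C l. Fun.swap x y r u \<le> j} \<le> card (?A \<union> ?X)"
    using finite_group[OF l] swap_sublevel_subset[where r = r and x = x and y = y and A = "C l" and j = j, OF \<open>r y < r x\<close>] by (intro card_mono) auto
  also have "\<dots> \<le> card ?A + card ?X"
    by (rule card_Un_le)
  finally have le: "card {u\<in>C l. Fun.swap x y r u \<le> j} \<le> card ?A + card ?X" .
  show "int (card {u\<in>C l. Fun.swap x y r u \<le> j}) \<le> ub j l"
  proof (cases "x \<in> C l \<and> r y \<le> j \<and> j < r x")
    case True
    then have "l = k"
      using groups_disjoint[OF l k] x by blast
    then have "int (card ?A) < ub j l"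
      using slack[OF j] True by simp
    moreover have "card ?X \<le> 1"
      using card_mono[of "{x}" ?X] by fastforce
    ultimately show ?thesis
      using le by linarith
  next
    case False
    then have "?X = {}"
      by auto
    with le have "card {u\<in>C l. Fun.swap x y r u \<le> j} \<le> card ?A"
      by (simp only: card.empty add_0_right)
    then show ?thesis
      using feasible_group_bound[OF r j l] by linarith
  qed
qed

lemma exists_nonmember_in_rank_window:
  assumes r: "r \<in> S" and q: "q \<in> S" and L: "L \<subseteq> U" and "a < b" "b \<le> n"
    and "rank_count L q a \<le> rank_count L r a" and "rank_count L r b < rank_count L q b"
  shows "\<exists>y\<in>U - L. a < r y \<and> r y \<le> b"
proof (rule ccontr)
  assume "\<not> ?thesis"
  then have window_in_L: "{u\<in>U. a < r u \<and> r u \<le> b} \<subseteq> L"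
    by auto
  have "finite L"
    using L finite_U finite_subset by blast
  have "{w\<in>L. r w \<le> b} = {w\<in>L. r w \<le> a} \<union> {u\<in>U. a < r u \<and> r u \<le> b}"
    using window_in_L L \<open>a < b\<close> by auto
  then have r_count: "rank_count L r b = rank_count L r a + (b - a)"
    using \<open>finite L\<close> finite_U card_rank_window[OF r \<open>b \<le> n\<close>]
    by (simp add: rank_count_def card_Un_disjoint disjoint_iff)
  have "rank_count L q b \<le> card ({w\<in>L. q w \<le> a} \<union> {u\<in>U. a < q u \<and> q u \<le> b})"
    unfolding rank_count_def using \<open>finite L\<close> finite_U L by (intro card_mono) auto
  also have "\<dots> \<le> card {w\<in>L. q w \<le> a} + card {u\<in>U. a < q u \<and> q u \<le> b}"
    by (rule card_Un_le)
  also have "\<dots> = rank_count L q a + (b - a)"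
    using card_rank_window[OF q \<open>b \<le> n\<close>] by (simp add: rank_count_def)
  finally show False
    using r_count assms(6,7) by linarith
qed

text \<open>Let j0 be the last position before i at which group k is tight. Comparing r and q on
  the window (j0, i] yields a non-member y of L there, and group k has slack at every position
  in [r y, r x): before i by the choice of j0, from i on because r ranks no further member of k
  above x, while q already ranks more members of k than r does in the top i.\<close>

lemma exists_cross_group_swap:
  assumes r: "r \<in> S" and q: "q \<in> S" and L: "L \<subseteq> U"
    and more: "rank_count L r i < rank_count L q i"
    and below: "\<And>j. j < i \<Longrightarrow> rank_count L q j \<le> rank_count L r j"
    and k: "k \<in> {1..t}" and x: "x \<in> C k" "i < r x"
    and next_in_group: "\<And>u. u \<in> C k \<Longrightarrow> i < r u \<Longrightarrow> r x \<le> r u"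
    and top_in_L: "\<And>u. u \<in> C k \<Longrightarrow> r u \<le> i \<Longrightarrow> u \<in> L"
    and fewer: "card {u\<in>C k. r u \<le> i} < card {u\<in>C k. q u \<le> i}"
  shows "\<exists>y\<in>U - L. r y < r x \<and> Fun.swap x y r \<in> S"
proof -
  have "x \<in> U"
    using x k group_subset by blast
  then have "i < n"
    using feasible_rank_in[OF r] x(2) by fastforce
  obtain u where "u \<in> C k" "q u \<le> i"
    using fewer by (metis (no_types, lifting) Collect_empty_eq card.empty not_less_zero)
  then have "0 < i"
    using feasible_rank_in[OF q] group_subset[OF k] by fastforce
  define tight where "tight j \<longleftrightarrow> ub j k \<le> int (card {u\<in>C k. r u \<le> j})" for j
  obtain j0 where "j0 < i" and slack_after_j0: "\<And>j. j0 < j \<Longrightarrow> j < i \<Longrightarrow> \<not> tight j"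
    using obtain_last_before[OF \<open>0 < i\<close>] by blast
  obtain y where y: "y \<in> U - L" "j0 < r y" "r y \<le> i"
    using exists_nonmember_in_rank_window[OF r q L \<open>j0 < i\<close> _ below[OF \<open>j0 < i\<close>] more] \<open>i < n\<close>
    by auto
  have "y \<notin> C k"
    using top_in_L y by blast
  have "r y < r x"
    using y x by simp
  have "int (card {u\<in>C k. r u \<le> j}) < ub j k" if j: "j \<in> {1..n}" "r y \<le> j" "j < r x" for j
  proof (cases "j < i")
    case True
    then show ?thesis
      using slack_after_j0[of j] y(2) j(2) by (simp add: tight_def)
  next
    case False
    have "{u\<in>C k. r u \<le> j} = {u\<in>C k. r u \<le> i}"
      using next_in_group False j(3) by force
    then have "card {u\<in>C k. r u \<le> j} = card {u\<in>C k. r u \<le> i}"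
      by simp
    moreover have "card {u\<in>C k. q u \<le> i} \<le> card {u\<in>C k. q u \<le> j}"
      using finite_group[OF k] False by (intro card_mono) auto
    moreover have "int (card {u\<in>C k. q u \<le> j}) \<le> ub j k"
      by (rule feasible_group_bound[OF q j(1) k])
    ultimately show ?thesis
      using fewer by linarith
  qed
  then have "Fun.swap x y r \<in> S"
    using y(1) by (intro feasible_swap_across_groups[OF r k x(1) _ \<open>y \<notin> C k\<close> \<open>r y < r x\<close>]) auto
  then show ?thesis
    using y \<open>r y < r x\<close> by blast
qed

lemma exists_group_member_below:
  assumes L: "L \<subseteq> U" and more: "rank_count L r i < rank_count L q i"
  obtains k w0 where "k \<in> {1..t}" "w0 \<in> L" "w0 \<in> C k" "i < r w0"
    and "card ({w\<in>L. r w \<le> i} \<inter> C k) < card ({w\<in>L. q w \<le> i} \<inter> C k)"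
proof -
  let ?X = "{w\<in>L. r w \<le> i}" and ?Y = "{w\<in>L. q w \<le> i}"
  have "?X \<subseteq> U" "?Y \<subseteq> U" "card ?X < card ?Y"
    using L more by (auto simp: rank_count_def)
  then obtain k where k: "k \<in> {1..t}" and more_k: "card (?X \<inter> C k) < card (?Y \<inter> C k)"
    by (rule exists_group_card_less)
  have "\<not> L \<inter> C k \<subseteq> ?X"
  proof
    assume "L \<inter> C k \<subseteq> ?X"
    then have "card (?Y \<inter> C k) \<le> card (?X \<inter> C k)"
      using finite_group[OF k] by (intro card_mono) auto
    then show False
      using more_k by simp
  qed
  then show ?thesis
    using that k more_k by force
qed

text \<open>Either a non-member of L in group k sits above w0, and the two are exchanged within the
  group, or x, the first member of group k below position i, belongs to L and is exchanged with
  a non-member of L from another group.\<close>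

lemma exists_lowering_swap:
  assumes r: "r \<in> S" and q: "q \<in> S" and L: "L \<subseteq> U"
    and more: "rank_count L r i < rank_count L q i"
    and below: "\<And>j. j < i \<Longrightarrow> rank_count L q j \<le> rank_count L r j"
  shows "\<exists>a\<in>L. \<exists>b\<in>U - L. r b < r a \<and> Fun.swap a b r \<in> S"
proof -
  obtain k w0 where k: "k \<in> {1..t}" and w0: "w0 \<in> L" "w0 \<in> C k" "i < r w0"
    and more_k: "card ({w\<in>L. r w \<le> i} \<inter> C k) < card ({w\<in>L. q w \<le> i} \<inter> C k)"
    by (rule exists_group_member_below[OF L more])
  show ?thesis
  proof (cases "\<exists>b\<in>C k - L. r b < r w0")
    case True
    then obtain b where "b \<in> C k" "b \<notin> L" "r b < r w0"
      by blast
    then show ?thesis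
      using feasible_swap_same_group[OF r k w0(2) \<open>b \<in> C k\<close>] w0(1) group_subset[OF k] by blast
  next
    case False
    then have above_w0_in_L: "\<And>u. u \<in> C k \<Longrightarrow> r u < r w0 \<Longrightarrow> u \<in> L"
      by blast
    obtain x where x: "x \<in> C k" "i < r x" and least: "\<And>u. u \<in> C k \<Longrightarrow> i < r u \<Longrightarrow> r x \<le> r u"
      using ex_has_least_nat[of "\<lambda>u. u \<in> C k \<and> i < r u" w0 r] w0 by blast
    have "x \<in> L"
    proof (cases "x = w0")
      case False
      then have "r x \<noteq> r w0"
        using bij_betw_imp_inj_on[OF feasible_bij_betw[OF r]] x(1) w0(2) group_subset[OF k]
        by (auto dest: inj_onD)
      then show ?thesis
        using least[OF w0(2,3)] above_w0_in_L[OF x(1)] by simp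
    qed (use w0 in simp)
    have top_in_L: "\<And>u. u \<in> C k \<Longrightarrow> r u \<le> i \<Longrightarrow> u \<in> L"
      using above_w0_in_L w0(3) by force
    have "{u\<in>C k. r u \<le> i} = {w\<in>L. r w \<le> i} \<inter> C k"
      using top_in_L by auto
    moreover have "card ({w\<in>L. q w \<le> i} \<inter> C k) \<le> card {u\<in>C k. q u \<le> i}"
      using finite_group[OF k] by (intro card_mono) auto
    ultimately have "card {u\<in>C k. r u \<le> i} < card {u\<in>C k. q u \<le> i}"
      using more_k by simp
    then obtain y where "y \<in> U - L" "r y < r x" "Fun.swap x y r \<in> S"
      using exists_cross_group_swap[OF r q L more below k x least top_in_L] by blast
    then show ?thesis
      using \<open>x \<in> L\<close> by blast
  qed
qed

text \<open>A lowering with minimal rank sum on L works: at the first position where some q beats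
  it, the exchange above would lower it further.\<close>

lemma exists_rank_count_maximal_lowering:
  assumes r: "r \<in> S" and L: "L \<subseteq> U"
  shows "\<exists>p\<in>S. (\<forall>w\<in>L. p w \<le> r w) \<and> (\<forall>q\<in>S. \<forall>i. rank_count L q i \<le> rank_count L p i)"
proof -
  define lowers where "lowers p \<longleftrightarrow> p \<in> S \<and> (\<forall>w\<in>L. p w \<le> r w)" for p
  obtain p where "lowers p" and minimal: "\<And>p'. lowers p' \<Longrightarrow> (\<Sum>w\<in>L. p w) \<le> (\<Sum>w\<in>L. p' w)"
    using ex_has_least_nat[of lowers r "\<lambda>p. \<Sum>w\<in>L. p w"] r by (auto simp: lowers_def)
  have "rank_count L q i \<le> rank_count L p i" if "q \<in> S" for q i
  proof (rule ccontr)
    assume violated: "\<not> ?thesis"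
    define i0 where "i0 = (LEAST i. rank_count L p i < rank_count L q i)"
    have "rank_count L p i0 < rank_count L q i0"
      using violated unfolding i0_def by (meson LeastI not_le)
    moreover have "rank_count L q j \<le> rank_count L p j" if "j < i0" for j
      using not_less_Least[OF that[unfolded i0_def]] by simp
    ultimately obtain a b where "a \<in> L" "b \<notin> L" "p b < p a" "Fun.swap a b p \<in> S"
      using exists_lowering_swap[OF _ \<open>q \<in> S\<close> L] \<open>lowers p\<close> by (meson DiffD2 lowers_def)
    note lowered = swap_lowers_ranks[OF \<open>a \<in> L\<close> \<open>b \<notin> L\<close> \<open>p b < p a\<close>]
    have "lowers (Fun.swap a b p)"
      using \<open>lowers p\<close> \<open>Fun.swap a b p \<in> S\<close> lowered(1) by (fastforce simp: lowers_def)
    moreover have "(\<Sum>w\<in>L. Fun.swap a b p w) < (\<Sum>w\<in>L. p w)"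
    proof (rule sum_strict_mono_ex1)
      show "finite L"
        using L finite_U by (rule finite_subset)
      show "\<forall>w\<in>L. Fun.swap a b p w \<le> p w"
        by (rule lowered(1))
      show "\<exists>w\<in>L. Fun.swap a b p w < p w"
        using lowered(2) \<open>a \<in> L\<close> by blast
    qed
    ultimately show False
      using minimal by fastforce
  qed
  then show ?thesis
    using \<open>lowers p\<close> by (auto simp: lowers_def)
qed

lemma expectation_eq_sum_feasible:
  assumes "set_pmf D \<subseteq> S"
  shows "measure_pmf.expectation D h = (\<Sum>r\<in>S. pmf D r * h r)"
  using integral_measure_pmf[OF finite_feasible, of D h] assms by auto

lemma sum_expval_eq:
  assumes "set_pmf D \<subseteq> S"
  shows "(\<Sum>u\<in>L. expval f g D u) = (\<Sum>r\<in>S. pmf D r * (\<Sum>u\<in>L. f (r u) - g u))"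
  by (simp add: expval_def val_def expectation_eq_sum_feasible[OF assms] sum_distrib_left sum.swap[of _ L])

lemma sum_expval_total:
  assumes "set_pmf D \<subseteq> S"
  shows "(\<Sum>u\<in>U. expval f g D u) = (\<Sum>i\<in>{1..n}. f i) - (\<Sum>u\<in>U. g u)"
proof -
  have "(\<Sum>u\<in>U. f (r u) - g u) = (\<Sum>i\<in>{1..n}. f i) - (\<Sum>u\<in>U. g u)" if "r \<in> S" for r
    using sum.reindex_bij_betw[OF feasible_bij_betw[OF that]] by (simp add: sum_subtractf)
  then show ?thesis
    using sum_pmf_eq_1[OF finite_feasible assms]
    by (simp add: sum_expval_eq[OF assms] sum_distrib_right[symmetric])
qed

lemma expval_map_pmf_eq_sum:
  assumes "set_pmf F \<subseteq> S"
  shows "expval f g (map_pmf T F) u = (\<Sum>r\<in>S. pmf F r * (f (T r u) - g u))"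
  using expectation_eq_sum_feasible[OF assms] by (simp add: expval_def val_def)

lemma sum_expval_le_map_pmf_rank_count_maximal:
  assumes f: "antimono_on {1..n} f" and F: "set_pmf F \<subseteq> S" and D: "set_pmf D \<subseteq> S"
    and L: "L \<subseteq> U" and T_feasible: "\<And>r. r \<in> S \<Longrightarrow> T r \<in> S"
    and T_maximal: "\<And>r q i. r \<in> S \<Longrightarrow> q \<in> S \<Longrightarrow> rank_count L q i \<le> rank_count L (T r) i"
  shows "(\<Sum>u\<in>L. expval f g D u) \<le> (\<Sum>u\<in>L. expval f g (map_pmf T F) u)"
proof -
  have finite_L: "finite L"
    using L finite_U by (rule finite_subset)
  have rank_in: "r w \<in> {1..n}" if "r \<in> S" "w \<in> L" for r w
    using feasible_rank_in[OF that(1)] L that(2) by blast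
  obtain r0 where r0: "r0 \<in> S"
    using F set_pmf_not_empty[of F] by blast
  define M where "M = (\<Sum>w\<in>L. f (T r0 w))"
  have "(\<Sum>w\<in>L. f (r w)) \<le> M" if "r \<in> S" for r
    unfolding M_def using rank_in that T_feasible[OF r0] T_maximal[OF r0 that]
    by (intro sum_comp_le_if_rank_count_le[OF finite_L f]) auto
  moreover have "M \<le> (\<Sum>w\<in>L. f (T r w))" if "r \<in> S" for r
    unfolding M_def using rank_in T_feasible[OF r0] T_feasible[OF that] T_maximal[OF that T_feasible[OF r0]]
    by (intro sum_comp_le_if_rank_count_le[OF finite_L f]) auto
  ultimately have "(\<Sum>r\<in>S. pmf D r * (\<Sum>u\<in>L. f (r u) - g u))
      \<le> (\<Sum>r\<in>S. pmf F r * (\<Sum>u\<in>L. f (T r u) - g u))"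
    by (intro sum_pmf_mult_le_sum_pmf_mult[OF finite_feasible D F, where M = "M - (\<Sum>u\<in>L. g u)"])
      (auto simp: sum_subtractf)
  then show ?thesis
    by (simp add: sum_expval_eq[OF D] expval_map_pmf_eq_sum[OF F] sum_distrib_left sum.swap[of _ L])
qed

lemma exists_pushed_distribution:
  assumes f: "antimono_on {1..n} f" and F: "set_pmf F \<subseteq> S" and L: "L \<subseteq> U"
  obtains G where "set_pmf G \<subseteq> S"
    and "\<And>w. w \<in> L \<Longrightarrow> expval f g F w \<le> expval f g G w"
    and "\<And>D. set_pmf D \<subseteq> S \<Longrightarrow> (\<Sum>u\<in>L. expval f g D u) \<le> (\<Sum>u\<in>L. expval f g G u)"
proof -
  obtain T where T_feasible: "\<And>r. r \<in> S \<Longrightarrow> T r \<in> S"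
    and T_lowers: "\<And>r w. r \<in> S \<Longrightarrow> w \<in> L \<Longrightarrow> T r w \<le> r w"
    and T_maximal: "\<And>r q i. r \<in> S \<Longrightarrow> q \<in> S \<Longrightarrow> rank_count L q i \<le> rank_count L (T r) i"
    using exists_rank_count_maximal_lowering[OF _ L] by metis
  show ?thesis
  proof (rule that)
    show "set_pmf (map_pmf T F) \<subseteq> S"
      using F T_feasible by auto
    show "expval f g F w \<le> expval f g (map_pmf T F) w" if "w \<in> L" for w
    proof -
      have "f (r w) \<le> f (T r w)" if "r \<in> S" for r
        using f feasible_rank_in[OF that] feasible_rank_in[OF T_feasible[OF that]] L \<open>w \<in> L\<close>
          T_lowers[OF that \<open>w \<in> L\<close>] by (auto simp: monotone_on_def)
      then have "(\<Sum>r\<in>S. pmf F r * (f (r w) - g w)) \<le> (\<Sum>r\<in>S. pmf F r * (f (T r w) - g w))"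
        by (intro sum_mono mult_left_mono) auto
      then show ?thesis
        using expval_map_pmf_eq_sum[OF F, of f g T w] expectation_eq_sum_feasible[OF F]
        by (simp add: expval_def val_def)
    qed
    show "(\<Sum>u\<in>L. expval f g D u) \<le> (\<Sum>u\<in>L. expval f g (map_pmf T F) u)" if "set_pmf D \<subseteq> S" for D
      by (rule sum_expval_le_map_pmf_rank_count_maximal[OF f F that L T_feasible T_maximal])
  qed
qed

lemma maxmin_fair_level_sums_le:
  assumes f: "antimono_on {1..n} f" and fair: "maxmin_fair U S f g F" and D: "set_pmf D \<subseteq> S"
  shows "(\<Sum>u\<in>{u\<in>U. expval f g F u \<le> c}. expval f g D u) \<le> (\<Sum>u\<in>{u\<in>U. expval f g F u \<le> c}. expval f g F u)"
    (is "(\<Sum>u\<in>?L. _) \<le> _")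
proof (rule ccontr)
  assume violated: "\<not> ?thesis"
  have F: "set_pmf F \<subseteq> S"
    using fair by (simp add: maxmin_fair_def)
  obtain G where G: "set_pmf G \<subseteq> S" and G_ge: "\<And>w. w \<in> ?L \<Longrightarrow> expval f g F w \<le> expval f g G w"
    and G_max: "\<And>D. set_pmf D \<subseteq> S \<Longrightarrow> (\<Sum>u\<in>?L. expval f g D u) \<le> (\<Sum>u\<in>?L. expval f g G u)"
    by (rule exists_pushed_distribution[OF f F, of ?L g]) auto
  have "(\<Sum>u\<in>?L. expval f g F u) < (\<Sum>u\<in>?L. expval f g G u)"
    using violated G_max[OF D] by linarith
  then obtain w where w: "w \<in> ?L" "expval f g F w < expval f g G w"
    by (meson not_less sum_mono)
  have "\<forall>u\<in>U. expval f g F u < expval f g G u \<longrightarrow>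
      (\<exists>v\<in>U. expval f g G v < expval f g F v \<and> expval f g F v \<le> expval f g F u)"
    using fair G by (simp add: maxmin_fair_def)
  then obtain v where "v \<in> U" "expval f g G v < expval f g F v" "expval f g F v \<le> expval f g F w"
    using w by blast
  then show False
    using G_ge[of v] w(1) by fastforce
qed

end

theorem mainTheorem4:
  fixes U :: "'a set" and t :: nat and C :: "nat \<Rightarrow> 'a set" and ub :: "nat \<Rightarrow> nat \<Rightarrow> int"
    and R :: "'a \<Rightarrow> real" and f :: "nat \<Rightarrow> real" and g :: "'a \<Rightarrow> real"
    and \<phi> :: "real \<Rightarrow> real" and F D :: "('a \<Rightarrow> nat) pmf"
  assumes "finite U"
    and "\<forall>k\<in>{1..t}. C k \<subseteq> U"
    and "\<forall>k\<in>{1..t}. \<forall>l\<in>{1..t}. k \<noteq> l \<longrightarrow> C k \<inter> C l = {}"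
    and "(\<Union>k\<in>{1..t}. C k) = U"
    and "inj_on R U"
    and "\<forall>i\<in>{1..card U}. \<forall>j\<in>{1..card U}. i \<le> j \<longrightarrow> f j \<le> f i"
    and "\<forall>u\<in>U. \<forall>v\<in>U. R u \<ge> R v \<longrightarrow> g u \<ge> g v"
    and "concave_on UNIV \<phi>"
    and "feasible U t C ub \<noteq> {}"
    and "maxmin_fair U (feasible U t C ub) f g F"
    and "set_pmf D \<subseteq> feasible U t C ub"
  shows "(\<Sum>u\<in>U. \<phi> (expval f g F u)) \<ge> (\<Sum>u\<in>U. \<phi> (expval f g D u))"
proof -
  interpret group_partition U t C ub
    using assms(1-4) by unfold_locales auto
  have f: "antimono_on {1..card U} f"
    using assms(6) by (auto simp: monotone_on_def)
  have F: "set_pmf F \<subseteq> feasible U t C ub"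
    using assms(10) by (simp add: maxmin_fair_def)
  show ?thesis
  proof (rule sum_concave_le_if_level_sums_le[OF assms(1,8)])
    show "(\<Sum>u\<in>{u\<in>U. expval f g F u \<le> c}. expval f g D u)
        \<le> (\<Sum>u\<in>{u\<in>U. expval f g F u \<le> c}. expval f g F u)" for c
      by (rule maxmin_fair_level_sums_le[OF f assms(10,11)])
    show "(\<Sum>u\<in>U. expval f g D u) = (\<Sum>u\<in>U. expval f g F u)"
      using sum_expval_total[OF assms(11)] sum_expval_total[OF F] by simp
  qed
qed

end
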